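(* For all $i,j,k,l\in\{1,\dots,\dim\theta\}$, $$\Big|[\mathrm{Cov}(\hat{\mathcal{I}}_1(\theta))]^{ijkl}\Big|\le\frac1N\|\partial_ih_L(x)\|_2\,\|\partial_jh_L(x)\|_2\,\|\partial_kh_L(x)\|_2\,\|\partial_lh_L(x)\|_2\,\big\|\mathcal{K}(t)-\mathcal{I}(h_L)\otimes\mathcal{I}(h_L)\big\|_F .$$
   Context: Setup. Fix an input $x\in\mathbb{R}^{n_0}$ and integers $L\ge1$, $n_1,\dots,n_L\ge1$. Network. The parameters are $\theta=(W_0,\dots,W_{L-1})$, with $W_l\in\mathbb{R}^{n_{l+1}\times(n_l+1)}$, viewed as a vector in $\mathbb{R}^{\dim\theta}$. Let $\sigma$ be differentiable and applied entrywise. Set $h_0=x$ and $\bar h_l=(h_l^\top,1)^\top$. For $1\le l\le L-1$ let $h_l=\sigma(W_{l-1}\bar h_{l-1})$, and let $h_L=W_{L-1}\bar h_{L-1}\in\mathbb{R}^{n_L}$. Exponential family. The model is $p(y\mid x,\theta)=\exp(t(y)^\top h_L-F(h_L))$ with respect to a base measure $\nu$, where $t(y)\in\mathbb{R}^{n_L}$ and $F(h)=\log\int\exp(t(y)^\top h)\,d\nu(y)$. Assume $h_L$ lies in the interior of the natural parameter space. Let $\eta=\mathbb{E}[t(y)]$ and $\mathcal{I}(h_L)=\mathrm{Cov}(t(y))$, with $y\sim p(y\mid x,\theta)$. Estimator. With $N$ i.i.d. samples $y_i\sim p(y\mid x,\theta)$ and $\ell_i=\log p(y_i\mid x,\theta)$,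 let $\hat{\mathcal{I}}_1(\theta)=\frac1N\sum_i\frac{\partial\ell_i}{\partial\theta}\frac{\partial\ell_i}{\partial\theta^\top}$. Notation. $[\mathrm{Cov}(\hat{\mathcal{I}}_1)]^{ijkl}=\mathrm{Cov}(\hat{\mathcal{I}}_1^{ij},\hat{\mathcal{I}}_1^{kl})$. $\partial_ih_L=\partial h_L/\partial\theta_i\in\mathbb{R}^{n_L}$. $\mathcal{K}_{abcd}(t)=\mathbb{E}[\prod_{e\in\{a,b,c,d\}}(t_e-\eta_e)]$. $(\mathcal{I}\otimes\mathcal{I})_{abcd}=\mathcal{I}_{ab}\mathcal{I}_{cd}$. $\|\cdot\|_F$ is the square root of the sum of squared entries. *)

theory Defs
  imports "HOL-Probability.Probability"
begin

(* Vectors in R^m are represented as functions nat => real; only coordinates a < m matter. *)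

definition dotn :: "nat \<Rightarrow> (nat \<Rightarrow> real) \<Rightarrow> (nat \<Rightarrow> real) \<Rightarrow> real" where
  "dotn m u v = (\<Sum>a<m. u a * v a)"

definition norm2n :: "nat \<Rightarrow> (nat \<Rightarrow> real) \<Rightarrow> real" where
  "norm2n m u = sqrt (\<Sum>a<m. (u a)\<^sup>2)"

definition frob4 :: "nat \<Rightarrow> (nat \<Rightarrow> nat \<Rightarrow> nat \<Rightarrow> nat \<Rightarrow> real) \<Rightarrow> real" where
  "frob4 m T = sqrt (\<Sum>a<m. \<Sum>b<m. \<Sum>c<m. \<Sum>d<m. (T a b c d)\<^sup>2)"

(* Parameter index set: theta_(l,r,c) = (W_l)_{r,c}, l < L, r < n_(l+1), c \<le> n_l
   (column c = n_l is the bias column). *)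
definition params :: "(nat \<Rightarrow> nat) \<Rightarrow> nat \<Rightarrow> (nat \<times> nat \<times> nat) set" where
  "params n L = {(l, r, c). l < L \<and> r < n (Suc l) \<and> c \<le> n l}"

definition preact :: "(nat \<Rightarrow> nat) \<Rightarrow> (nat \<times> nat \<times> nat \<Rightarrow> real) \<Rightarrow> nat \<Rightarrow> (nat \<Rightarrow> real) \<Rightarrow> nat \<Rightarrow> real" where
  "preact n \<theta> l h r = (\<Sum>c<n l. \<theta> (l, r, c) * h c) + \<theta> (l, r, n l)"

primrec hid :: "(nat \<Rightarrow> nat) \<Rightarrow> (real \<Rightarrow> real) \<Rightarrow> (nat \<Rightarrow> real) \<Rightarrow> (nat \<times> nat \<times> nat \<Rightarrow> real)
    \<Rightarrow> nat \<Rightarrow> nat \<Rightarrow> real" where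
  "hid n \<sigma> x \<theta> 0 = x"
| "hid n \<sigma> x \<theta> (Suc l) = (\<lambda>r. \<sigma> (preact n \<theta> l (hid n \<sigma> x \<theta> l) r))"

definition net_out :: "(nat \<Rightarrow> nat) \<Rightarrow> (real \<Rightarrow> real) \<Rightarrow> nat \<Rightarrow> (nat \<Rightarrow> real)
    \<Rightarrow> (nat \<times> nat \<times> nat \<Rightarrow> real) \<Rightarrow> nat \<Rightarrow> real" where
  "net_out n \<sigma> L x \<theta> = preact n \<theta> (L - 1) (hid n \<sigma> x \<theta> (L - 1))"

definition pderiv_param :: "((nat \<times> nat \<times> nat \<Rightarrow> real) \<Rightarrow> real) \<Rightarrow> (nat \<times> nat \<times> nat \<Rightarrow> real)
    \<Rightarrow> nat \<times> nat \<times> nat \<Rightarrow> real" where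
  "pderiv_param f \<theta> p = deriv (\<lambda>e. f (\<theta>(p := \<theta> p + e))) 0"

definition jac_col :: "(nat \<Rightarrow> nat) \<Rightarrow> (real \<Rightarrow> real) \<Rightarrow> nat \<Rightarrow> (nat \<Rightarrow> real)
    \<Rightarrow> (nat \<times> nat \<times> nat \<Rightarrow> real) \<Rightarrow> nat \<times> nat \<times> nat \<Rightarrow> nat \<Rightarrow> real" where
  "jac_col n \<sigma> L x \<theta> p = (\<lambda>a. pderiv_param (\<lambda>\<theta>'. net_out n \<sigma> L x \<theta>' a) \<theta> p)"

definition nat_param_space :: "'y measure \<Rightarrow> ('y \<Rightarrow> nat \<Rightarrow> real) \<Rightarrow> nat \<Rightarrow> (nat \<Rightarrow> real) set" where
  "nat_param_space \<nu> t m = {h. (\<integral>\<^sup>+ y. ennreal (exp (dotn m (t y) h)) \<partial>\<nu>) < \<infinity>}"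

definition in_interior_coords :: "nat \<Rightarrow> (nat \<Rightarrow> real) set \<Rightarrow> (nat \<Rightarrow> real) \<Rightarrow> bool" where
  "in_interior_coords m S h = (\<exists>e>0. \<forall>h'. (\<forall>a<m. \<bar>h' a - h a\<bar> < e) \<longrightarrow> h' \<in> S)"

definition log_partition :: "'y measure \<Rightarrow> ('y \<Rightarrow> nat \<Rightarrow> real) \<Rightarrow> nat \<Rightarrow> (nat \<Rightarrow> real) \<Rightarrow> real" where
  "log_partition \<nu> t m h = ln (\<integral> y. exp (dotn m (t y) h) \<partial>\<nu>)"

definition expfam_density :: "'y measure \<Rightarrow> ('y \<Rightarrow> nat \<Rightarrow> real) \<Rightarrow> nat \<Rightarrow> (nat \<Rightarrow> real) \<Rightarrow> 'y \<Rightarrow> real" where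
  "expfam_density \<nu> t m h y = exp (dotn m (t y) h - log_partition \<nu> t m h)"

definition expfam_measure :: "'y measure \<Rightarrow> ('y \<Rightarrow> nat \<Rightarrow> real) \<Rightarrow> nat \<Rightarrow> (nat \<Rightarrow> real) \<Rightarrow> 'y measure" where
  "expfam_measure \<nu> t m h = density \<nu> (\<lambda>y. ennreal (expfam_density \<nu> t m h y))"

definition suff_mean :: "'y measure \<Rightarrow> ('y \<Rightarrow> nat \<Rightarrow> real) \<Rightarrow> nat \<Rightarrow> (nat \<Rightarrow> real) \<Rightarrow> nat \<Rightarrow> real" where
  "suff_mean \<nu> t m h a = (\<integral> y. t y a \<partial>(expfam_measure \<nu> t m h))"

definition suff_cov :: "'y measure \<Rightarrow> ('y \<Rightarrow> nat \<Rightarrow> real) \<Rightarrow> nat \<Rightarrow> (nat \<Rightarrow> real) \<Rightarrow> nat \<Rightarrow> nat \<Rightarrow> real" where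
  "suff_cov \<nu> t m h a b = (\<integral> y. (t y a - suff_mean \<nu> t m h a) * (t y b - suff_mean \<nu> t m h b)
      \<partial>(expfam_measure \<nu> t m h))"

definition suff_K :: "'y measure \<Rightarrow> ('y \<Rightarrow> nat \<Rightarrow> real) \<Rightarrow> nat \<Rightarrow> (nat \<Rightarrow> real)
    \<Rightarrow> nat \<Rightarrow> nat \<Rightarrow> nat \<Rightarrow> nat \<Rightarrow> real" where
  "suff_K \<nu> t m h a b c d = (\<integral> y. (t y a - suff_mean \<nu> t m h a) * (t y b - suff_mean \<nu> t m h b)
      * (t y c - suff_mean \<nu> t m h c) * (t y d - suff_mean \<nu> t m h d) \<partial>(expfam_measure \<nu> t m h))"

definition net_model :: "'y measure \<Rightarrow> ('y \<Rightarrow> nat \<Rightarrow> real) \<Rightarrow> (nat \<Rightarrow> nat) \<Rightarrow> (real \<Rightarrow> real) \<Rightarrow> nat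
    \<Rightarrow> (nat \<Rightarrow> real) \<Rightarrow> (nat \<times> nat \<times> nat \<Rightarrow> real) \<Rightarrow> 'y measure" where
  "net_model \<nu> t n \<sigma> L x \<theta> = expfam_measure \<nu> t (n L) (net_out n \<sigma> L x \<theta>)"

definition loglik :: "'y measure \<Rightarrow> ('y \<Rightarrow> nat \<Rightarrow> real) \<Rightarrow> (nat \<Rightarrow> nat) \<Rightarrow> (real \<Rightarrow> real) \<Rightarrow> nat
    \<Rightarrow> (nat \<Rightarrow> real) \<Rightarrow> (nat \<times> nat \<times> nat \<Rightarrow> real) \<Rightarrow> 'y \<Rightarrow> real" where
  "loglik \<nu> t n \<sigma> L x \<theta> y = ln (expfam_density \<nu> t (n L) (net_out n \<sigma> L x \<theta>) y)"

definition emp_fisher :: "nat \<Rightarrow> 'y measure \<Rightarrow> ('y \<Rightarrow> nat \<Rightarrow> real) \<Rightarrow> (nat \<Rightarrow> nat) \<Rightarrow> (real \<Rightarrow> real) \<Rightarrow> nat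
    \<Rightarrow> (nat \<Rightarrow> real) \<Rightarrow> (nat \<times> nat \<times> nat \<Rightarrow> real) \<Rightarrow> (nat \<Rightarrow> 'y)
    \<Rightarrow> nat \<times> nat \<times> nat \<Rightarrow> nat \<times> nat \<times> nat \<Rightarrow> real" where
  "emp_fisher N \<nu> t n \<sigma> L x \<theta> ys p q =
     (1 / real N) * (\<Sum>s<N. pderiv_param (\<lambda>\<theta>'. loglik \<nu> t n \<sigma> L x \<theta>' (ys s)) \<theta> p
                          * pderiv_param (\<lambda>\<theta>'. loglik \<nu> t n \<sigma> L x \<theta>' (ys s)) \<theta> q)"

definition covar :: "'a measure \<Rightarrow> ('a \<Rightarrow> real) \<Rightarrow> ('a \<Rightarrow> real) \<Rightarrow> real" where
  "covar Q X Y = (\<integral> \<omega>. (X \<omega> - (\<integral> \<omega>'. X \<omega>' \<partial>Q)) * (Y \<omega> - (\<integral> \<omega>'. Y \<omega>' \<partial>Q)) \<partial>Q)"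

end

theory Submission
  imports Defs
begin

(* The score of one observation is the centred sufficient statistic contracted with a column of
   the Jacobian: d/d theta_p log p(y | x, theta) = (t(y) - eta) . d_p h_L.  Differentiating the
   log-partition function under the integral is justified by dominated convergence, since t has
   exponential moments around an interior natural parameter; these also make all polynomial
   moments of t finite.

   The estimator is the mean of N i.i.d. copies of d_i l * d_j l, so its covariance is 1/N times
   the one-sample covariance E[d_i l d_j l d_k l d_l l] - E[d_i l d_j l] E[d_k l d_l l].  Expanding
   the scores, this is the contraction of K - I (x) I with d_i h_L (x) d_j h_L (x) d_k h_L (x) d_l h_L,
   and Cauchy-Schwarz bounds it by the product of the Euclidean norms and the Frobenius norm. *)

lemma abs_sum_mult_le_sqrt_sum_squares:
  fixes f g :: "'a \<Rightarrow> real"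
  shows "\<bar>\<Sum>x\<in>A. f x * g x\<bar> \<le> sqrt (\<Sum>x\<in>A. (f x)\<^sup>2) * sqrt (\<Sum>x\<in>A. (g x)\<^sup>2)"
proof -
  have "(\<Sum>x\<in>A. f x * g x)\<^sup>2 \<le> (\<Sum>x\<in>A. (f x)\<^sup>2) * (\<Sum>x\<in>A. (g x)\<^sup>2)"
    by (rule Cauchy_Schwarz_ineq_sum)
  then have "sqrt ((\<Sum>x\<in>A. f x * g x)\<^sup>2) \<le> sqrt ((\<Sum>x\<in>A. (f x)\<^sup>2) * (\<Sum>x\<in>A. (g x)\<^sup>2))"
    by (rule real_sqrt_le_mono)
  then show ?thesis
    by (simp add: real_sqrt_mult)
qed

lemma sum_lessThan_4_cartesian:
  "(\<Sum>a<m. \<Sum>b<m. \<Sum>c<m. \<Sum>d<m. F a b c d) =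
   (\<Sum>(a, b, c, d)\<in>{..<m::nat} \<times> {..<m} \<times> {..<m} \<times> {..<m}. (F a b c d :: real))"
  by (simp add: sum.cartesian_product)

lemma abs_tensor_contraction_le_frob4:
  "\<bar>\<Sum>a<m. \<Sum>b<m. \<Sum>c<m. \<Sum>d<m. T a b c d * (u a * v b * w c * z d)\<bar>
   \<le> norm2n m u * norm2n m v * norm2n m w * norm2n m z * frob4 m T"
proof -
  let ?Q = "{..<m} \<times> {..<m} \<times> {..<m} \<times> {..<m}"
  let ?f = "\<lambda>(a, b, c, d). T a b c d" and ?g = "\<lambda>(a, b, c, d). u a * v b * w c * z d"
  have contraction: "(\<Sum>a<m. \<Sum>b<m. \<Sum>c<m. \<Sum>d<m. T a b c d * (u a * v b * w c * z d)) = (\<Sum>q\<in>?Q. ?f q * ?g q)"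
    and frob: "(\<Sum>q\<in>?Q. (?f q)\<^sup>2) = (\<Sum>a<m. \<Sum>b<m. \<Sum>c<m. \<Sum>d<m. (T a b c d)\<^sup>2)"
    and rank_one: "(\<Sum>q\<in>?Q. (?g q)\<^sup>2) = (\<Sum>a<m. \<Sum>b<m. \<Sum>c<m. \<Sum>d<m. (u a * v b * w c * z d)\<^sup>2)"
    by (subst sum_lessThan_4_cartesian; auto intro!: sum.cong)+
  have "(\<Sum>a<m. \<Sum>b<m. \<Sum>c<m. \<Sum>d<m. (u a * v b * w c * z d)\<^sup>2)
      = (\<Sum>a<m. (u a)\<^sup>2 * (\<Sum>b<m. (v b)\<^sup>2 * (\<Sum>c<m. (w c)\<^sup>2 * (\<Sum>d<m. (z d)\<^sup>2))))"
    by (simp add: power_mult_distrib sum_distrib_left mult.assoc)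
  also have "\<dots> = (\<Sum>a<m. (u a)\<^sup>2) * ((\<Sum>b<m. (v b)\<^sup>2) * ((\<Sum>c<m. (w c)\<^sup>2) * (\<Sum>d<m. (z d)\<^sup>2)))"
    by (simp add: sum_distrib_right)
  finally show ?thesis
    using abs_sum_mult_le_sqrt_sum_squares[of ?f ?g ?Q]
    unfolding contraction frob rank_one norm2n_def frob4_def
    by (simp add: real_sqrt_mult mult_ac)
qed

lemma abs_dotn_diff_le:
  assumes "\<And>a. a < m \<Longrightarrow> \<bar>h a - h' a\<bar> \<le> \<delta>"
  shows "\<bar>dotn m u h - dotn m u h'\<bar> \<le> (\<Sum>a<m. \<bar>u a\<bar>) * \<delta>"
proof -
  have "\<bar>dotn m u h - dotn m u h'\<bar> = \<bar>\<Sum>a<m. u a * (h a - h' a)\<bar>"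
    unfolding dotn_def by (simp add: sum_subtractf right_diff_distrib)
  also have "\<dots> \<le> (\<Sum>a<m. \<bar>u a\<bar> * \<delta>)"
    by (rule order_trans[OF sum_abs]) (auto intro!: sum_mono mult_left_mono assms simp: abs_mult)
  finally show ?thesis by (simp add: sum_distrib_right)
qed

lemma dotn_update_add:
  assumes "a < m"
  shows "dotn m u (h(a := h a + c)) = dotn m u h + u a * c"
proof -
  have "dotn m u (h(a := h a + c)) = (\<Sum>b<m. u b * h b + (if b = a then u a * c else 0))"
    unfolding dotn_def by (rule sum.cong) (auto simp: distrib_left)
  then show ?thesis
    using assms unfolding dotn_def by (simp add: sum.distrib)
qed

lemma has_real_derivative_dotn:
  assumes "\<And>a. a < m \<Longrightarrow> ((\<lambda>e. H e a) has_real_derivative J a) (at e0)"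
  shows "((\<lambda>e. dotn m u (H e)) has_real_derivative dotn m u J) (at e0)"
  unfolding dotn_def by (intro DERIV_sum DERIV_cmult assms) simp

lemma DERIV_eventually_abs_diff_le:
  assumes "(f has_real_derivative D) (at x)"
  shows "\<forall>\<^sub>F e in at 0. \<bar>f (x + e) - f x\<bar> \<le> (\<bar>D\<bar> + 1) * \<bar>e\<bar>"
proof -
  have "((\<lambda>e. (f (x + e) - f x) / e) \<longlongrightarrow> D) (at 0)"
    using assms unfolding DERIV_def .
  then have "\<forall>\<^sub>F e in at 0. dist ((f (x + e) - f x) / e) D < 1"
    by (rule tendstoD) simp
  moreover have "\<forall>\<^sub>F e in at (0::real). e \<noteq> 0"
    by (simp add: eventually_at_filter)
  ultimately show ?thesis
  proof eventually_elim
    case (elim e)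
    then have "\<bar>(f (x + e) - f x) / e\<bar> \<le> \<bar>D\<bar> + 1"
      unfolding dist_real_def by linarith
    then have "\<bar>(f (x + e) - f x) / e\<bar> * \<bar>e\<bar> \<le> (\<bar>D\<bar> + 1) * \<bar>e\<bar>"
      by (rule mult_right_mono) simp
    then show ?case
      using elim(2) by (simp add: abs_divide)
  qed
qed

lemma dotn_cong: "(\<And>a. a < m \<Longrightarrow> h a = h' a) \<Longrightarrow> dotn m u h = dotn m u h'"
  unfolding dotn_def by simp

lemma eventually_has_derivative_coords_close:
  fixes m :: nat and H :: "real \<Rightarrow> nat \<Rightarrow> real"
  assumes "\<And>a. a < m \<Longrightarrow> ((\<lambda>e. H e a) has_real_derivative J a) (at 0)"
  shows "\<forall>\<^sub>F e in at 0. \<forall>a<m. \<bar>H e a - H 0 a\<bar> \<le> (1 + (\<Sum>a<m. \<bar>J a\<bar>)) * \<bar>e\<bar>"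
proof -
  have "\<forall>\<^sub>F e in at 0. \<forall>a\<in>{..<m}. \<bar>H e a - H 0 a\<bar> \<le> (1 + (\<Sum>a<m. \<bar>J a\<bar>)) * \<bar>e\<bar>"
  proof (rule eventually_ball_finite, simp, intro ballI)
    fix a assume "a \<in> {..<m}"
    then have "\<bar>J a\<bar> + 1 \<le> 1 + (\<Sum>a<m. \<bar>J a\<bar>)"
      using member_le_sum[of a "{..<m}" "\<lambda>a. \<bar>J a\<bar>"] by simp
    then have bound: "(\<bar>J a\<bar> + 1) * \<bar>e\<bar> \<le> (1 + (\<Sum>a<m. \<bar>J a\<bar>)) * \<bar>e\<bar>" for e :: real
      by (rule mult_right_mono) simp
    show "\<forall>\<^sub>F e in at 0. \<bar>H e a - H 0 a\<bar> \<le> (1 + (\<Sum>a<m. \<bar>J a\<bar>)) * \<bar>e\<bar>"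
      using DERIV_eventually_abs_diff_le[OF assms, of a] \<open>a \<in> {..<m}\<close>
      by (auto elim!: eventually_mono intro: order_trans[OF _ bound])
  qed
  then show ?thesis
    by (rule eventually_mono) simp
qed

lemma abs_exp_minus_one_le: "\<bar>exp x - 1\<bar> \<le> \<bar>x\<bar> * exp \<bar>x\<bar>" for x :: real
proof (cases "x \<ge> 0")
  case True
  have "(1 - x) * exp x \<le> exp (- x) * exp x"
    using exp_ge_add_one_self[of "- x"] by (intro mult_right_mono) auto
  then show ?thesis
    using True by (simp add: algebra_simps exp_minus_inverse)
next
  case False
  then have "\<bar>exp x - 1\<bar> = 1 - exp x"
    by simp
  also have "\<dots> \<le> \<bar>x\<bar>"
    using exp_ge_add_one_self[of x] False by linarith
  also have "\<dots> \<le> \<bar>x\<bar> * exp \<bar>x\<bar>"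
    by (simp add: mult_le_cancel_left1)
  finally show ?thesis .
qed

lemma power_le_exp:
  fixes z :: real
  assumes "0 \<le> z"
  shows "z ^ k \<le> real k ^ k * exp z"
proof (cases "k = 0")
  case False
  have "z / k \<le> exp (z / k)"
    using exp_ge_add_one_self[of "z / k"] by linarith
  then have "(z / k) ^ k \<le> exp (z / k) ^ k"
    using assms by (intro power_mono) auto
  also have "\<dots> = exp z"
    using False by (simp add: exp_of_nat_mult[symmetric])
  finally show ?thesis
    using False by (simp add: power_divide field_simps)
qed (use assms in simp)

section \<open>Dominated convergence and i.i.d. products\<close>

lemma integral_dominated_convergence_at:
  fixes s :: "real \<Rightarrow> 'a \<Rightarrow> real"
  assumes "\<And>e. s e \<in> borel_measurable M" and "f \<in> borel_measurable M" and "integrable M w"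
    and lim: "\<And>y. y \<in> space M \<Longrightarrow> ((\<lambda>e. s e y) \<longlongrightarrow> f y) (at x0)"
    and bound: "\<forall>\<^sub>F e in at x0. \<forall>y\<in>space M. \<bar>s e y\<bar> \<le> w y"
  shows "((\<lambda>e. integral\<^sup>L M (s e)) \<longlongrightarrow> integral\<^sup>L M f) (at x0)"
  unfolding tendsto_at_iff_sequentially comp_def
proof (intro allI impI)
  fix X :: "nat \<Rightarrow> real" assume "\<forall>i. X i \<in> UNIV - {x0}" and "X \<longlonglongrightarrow> x0"
  then have X: "filterlim X (at x0) sequentially"
    by (intro filterlim_atI) auto
  from filterlim_iff[THEN iffD1, OF X, rule_format, OF bound]
  obtain N where w: "\<And>n. N \<le> n \<Longrightarrow> \<forall>y\<in>space M. \<bar>s (X n) y\<bar> \<le> w y"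
    by (auto simp: eventually_sequentially)
  show "(\<lambda>n. integral\<^sup>L M (s (X n))) \<longlonglongrightarrow> integral\<^sup>L M f"
  proof (rule LIMSEQ_offset, rule integral_dominated_convergence)
    show "AE y in M. norm (s (X (n + N)) y) \<le> w y" for n
      using w[of "n + N"] by (intro AE_I2) auto
    show "AE y in M. (\<lambda>n. s (X (n + N)) y) \<longlonglongrightarrow> f y"
      using lim by (intro AE_I2 LIMSEQ_ignore_initial_segment filterlim_compose[OF _ X])
  qed (use assms in auto)
qed

lemma
  fixes P :: "'y measure" and f g :: "'y \<Rightarrow> real"
  assumes "prob_space P" and "finite I" and "s \<in> I" and "s' \<in> I" and "s \<noteq> s'"
    and "integrable P f" and "integrable P g"
  shows integral_PiM_two_coordinates:
      "(\<integral>ys. f (ys s) * g (ys s') \<partial>PiM I (\<lambda>_. P)) = integral\<^sup>L P f * integral\<^sup>L P g"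
    and integrable_PiM_two_coordinates:
      "integrable (PiM I (\<lambda>_. P)) (\<lambda>ys. f (ys s) * g (ys s'))"
proof -
  interpret prob_space P by fact
  interpret product_sigma_finite "\<lambda>_. P" by standard
  define F where "F i = (if i = s then f else if i = s' then g else (\<lambda>_. 1))" for i
  have intF: "integrable P (F i)" for i
    unfolding F_def using assms by auto
  have prod_F: "(\<Prod>i\<in>I. F i (ys i)) = f (ys s) * g (ys s')" for ys
  proof -
    have "(\<Prod>i\<in>I. F i (ys i)) = (\<Prod>i\<in>I. (if i = s then f (ys i) else 1) * (if i = s' then g (ys i) else 1))"
      using assms by (intro prod.cong) (auto simp: F_def)
    then show ?thesis
      using assms by (simp add: prod.distrib)
  qed
  have "(\<Prod>i\<in>I. integral\<^sup>L P (F i))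
      = (\<Prod>i\<in>I. (if i = s then integral\<^sup>L P f else 1) * (if i = s' then integral\<^sup>L P g else 1))"
    using assms by (intro prod.cong) (auto simp: F_def prob_space)
  then have "(\<Prod>i\<in>I. integral\<^sup>L P (F i)) = integral\<^sup>L P f * integral\<^sup>L P g"
    using assms by (simp add: prod.distrib)
  then show "(\<integral>ys. f (ys s) * g (ys s') \<partial>PiM I (\<lambda>_. P)) = integral\<^sup>L P f * integral\<^sup>L P g"
    using product_integral_prod[of I F] intF assms(2) unfolding prod_F by simp
  show "integrable (PiM I (\<lambda>_. P)) (\<lambda>ys. f (ys s) * g (ys s'))"
    using product_integrable_prod[of I F] intF assms(2) unfolding prod_F by simp
qed

lemma
  fixes P :: "'y measure" and f :: "'y \<Rightarrow> real"
  assumes "prob_space P" and "finite I" and "s \<in> I" and "integrable P f"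
  shows integral_PiM_coordinate: "(\<integral>ys. f (ys s) \<partial>PiM I (\<lambda>_. P)) = integral\<^sup>L P f"
    and integrable_PiM_coordinate: "integrable (PiM I (\<lambda>_. P)) (\<lambda>ys. f (ys s))"
proof -
  interpret prob_space P by fact
  interpret product_sigma_finite "\<lambda>_. P" by standard
  define F where "F i = (if i = s then f else (\<lambda>_. 1))" for i
  have intF: "integrable P (F i)" for i
    unfolding F_def using assms by auto
  have prod_F: "(\<Prod>i\<in>I. F i (ys i)) = f (ys s)" for ys
    using assms by (simp add: F_def if_distrib[of "\<lambda>f. f _"])
  have "(\<Prod>i\<in>I. integral\<^sup>L P (F i)) = (\<Prod>i\<in>I. if i = s then integral\<^sup>L P f else 1)"
    using assms by (intro prod.cong) (auto simp: F_def prob_space)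
  then have "(\<Prod>i\<in>I. integral\<^sup>L P (F i)) = integral\<^sup>L P f"
    using assms by simp
  then show "(\<integral>ys. f (ys s) \<partial>PiM I (\<lambda>_. P)) = integral\<^sup>L P f"
    using product_integral_prod[of I F] intF assms(2) unfolding prod_F by simp
  show "integrable (PiM I (\<lambda>_. P)) (\<lambda>ys. f (ys s))"
    using product_integrable_prod[of I F] intF assms(2) unfolding prod_F by simp
qed

lemma covar_eq_integral_mult_minus:
  fixes A B :: "'y \<Rightarrow> real"
  assumes "prob_space P" and "integrable P A" and "integrable P B" and "integrable P (\<lambda>y. A y * B y)"
  shows "covar P A B = (\<integral>y. A y * B y \<partial>P) - integral\<^sup>L P A * integral\<^sup>L P B"
proof -
  interpret prob_space P by fact
  have "covar P A B = (\<integral>y. A y * B y - integral\<^sup>L P B * A y - integral\<^sup>L P A * B y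
      + integral\<^sup>L P A * integral\<^sup>L P B \<partial>P)"
    unfolding covar_def by (simp add: algebra_simps)
  then show ?thesis
    using assms by (simp add: prob_space)
qed

lemma integrable_mult_shifted:
  fixes A B :: "'y \<Rightarrow> real"
  assumes "prob_space P" and "integrable P A" and "integrable P B" and "integrable P (\<lambda>y. A y * B y)"
  shows "integrable P (\<lambda>y. (A y - a) * (B y - b))"
proof -
  interpret prob_space P by fact
  have "integrable P (\<lambda>y. A y * B y - b * A y - a * B y + a * b)"
    using assms by auto
  then show ?thesis
    by (simp add: algebra_simps)
qed

lemma integral_PiM_empirical_mean:
  fixes F :: "'y \<Rightarrow> real"
  assumes "prob_space P" and "integrable P F" and "N \<ge> 1"
  shows "(\<integral>ys. (1 / real N) * (\<Sum>s<N. F (ys s)) \<partial>PiM {..<N} (\<lambda>_. P)) = integral\<^sup>L P F"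
proof -
  have "(\<integral>ys. (\<Sum>s<N. F (ys s)) \<partial>PiM {..<N} (\<lambda>_. P))
      = (\<Sum>s<N. \<integral>ys. F (ys s) \<partial>PiM {..<N} (\<lambda>_. P))"
    using integrable_PiM_coordinate[OF assms(1) finite_lessThan _ assms(2)]
    by (intro Bochner_Integration.integral_sum) auto
  also have "\<dots> = real N * integral\<^sup>L P F"
    using integral_PiM_coordinate[OF assms(1) finite_lessThan _ assms(2)] by simp
  finally show ?thesis
    using assms(3) by simp
qed

lemma integral_PiM_centred_coordinates:
  fixes A B :: "'y \<Rightarrow> real" and s s' N :: nat
  assumes "prob_space P" and "integrable P A" and "integrable P B" and "integrable P (\<lambda>y. A y * B y)"
    and "s < N" and "s' < N"
  shows "integrable (PiM {..<N} (\<lambda>_. P)) (\<lambda>ys. (A (ys s) - integral\<^sup>L P A) * (B (ys s') - integral\<^sup>L P B))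
    \<and> (\<integral>ys. (A (ys s) - integral\<^sup>L P A) * (B (ys s') - integral\<^sup>L P B) \<partial>PiM {..<N} (\<lambda>_. P))
      = (if s = s' then covar P A B else 0)"
proof (cases "s = s'")
  case True
  have centred: "integrable P (\<lambda>y. (A y - integral\<^sup>L P A) * (B y - integral\<^sup>L P B))"
    using assms by (intro integrable_mult_shifted) auto
  show ?thesis
    using True assms(5) integral_PiM_coordinate[OF assms(1) finite_lessThan[of N] _ centred, of s]
      integrable_PiM_coordinate[OF assms(1) finite_lessThan[of N] _ centred, of s]
    unfolding covar_def by simp
next
  case False
  interpret prob_space P by fact
  have cA: "integrable P (\<lambda>y. A y - integral\<^sup>L P A)"
    and cA0: "integral\<^sup>L P (\<lambda>y. A y - integral\<^sup>L P A) = 0"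
    and cB: "integrable P (\<lambda>y. B y - integral\<^sup>L P B)"
    using assms by (auto simp: prob_space)
  show ?thesis
    using False assms(5,6) cA0
      integral_PiM_two_coordinates[OF assms(1) finite_lessThan _ _ False cA cB]
      integrable_PiM_two_coordinates[OF assms(1) finite_lessThan _ _ False cA cB]
    by simp
qed

lemma covar_PiM_empirical_means:
  fixes A B :: "'y \<Rightarrow> real"
  assumes P: "prob_space P" and "N \<ge> 1"
    and A: "integrable P A" and B: "integrable P B" and AB: "integrable P (\<lambda>y. A y * B y)"
  shows "covar (PiM {..<N} (\<lambda>_. P)) (\<lambda>ys. (1 / real N) * (\<Sum>s<N. A (ys s)))
      (\<lambda>ys. (1 / real N) * (\<Sum>s<N. B (ys s))) = covar P A B / real N"
proof -
  let ?Q = "PiM {..<N} (\<lambda>_. P)"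
  define C where "C s s' ys = (A (ys s) - integral\<^sup>L P A) * (B (ys s') - integral\<^sup>L P B)"
    for s s' :: nat and ys :: "nat \<Rightarrow> 'y"
  have C: "integrable ?Q (C s s')" "integral\<^sup>L ?Q (C s s') = (if s = s' then covar P A B else 0)"
    if "s < N" "s' < N" for s s'
    using integral_PiM_centred_coordinates[OF P A B AB that] unfolding C_def by auto
  have centre: "(1 / real N) * (\<Sum>s<N. F (ys s)) - c = (1 / real N) * (\<Sum>s<N. F (ys s) - c)"
    for F :: "'y \<Rightarrow> real" and c ys
    using \<open>N \<ge> 1\<close> by (simp add: sum_subtractf right_diff_distrib)
  have "covar ?Q (\<lambda>ys. (1 / real N) * (\<Sum>s<N. A (ys s))) (\<lambda>ys. (1 / real N) * (\<Sum>s<N. B (ys s)))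
      = (\<integral>ys. (\<Sum>s<N. \<Sum>s'<N. C s s' ys) / (real N)\<^sup>2 \<partial>?Q)"
    unfolding covar_def integral_PiM_empirical_mean[OF P A \<open>N \<ge> 1\<close>]
      integral_PiM_empirical_mean[OF P B \<open>N \<ge> 1\<close>] centre C_def
    by (simp add: sum_product power2_eq_square)
  also have "\<dots> = (\<integral>ys. (\<Sum>s<N. \<Sum>s'<N. C s s' ys) \<partial>?Q) / (real N)\<^sup>2"
    by simp
  also have "(\<integral>ys. (\<Sum>s<N. \<Sum>s'<N. C s s' ys) \<partial>?Q) = (\<Sum>s<N. \<integral>ys. (\<Sum>s'<N. C s s' ys) \<partial>?Q)"
    by (intro Bochner_Integration.integral_sum Bochner_Integration.integrable_sum C) auto
  also have "\<dots> = (\<Sum>s<N. \<Sum>s'<N. integral\<^sup>L ?Q (C s s'))"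
    by (intro sum.cong refl Bochner_Integration.integral_sum C) auto
  also have "\<dots> = real N * covar P A B"
    using C by simp
  finally show ?thesis
    by (simp add: power2_eq_square)
qed

lemma emeasure_density_space_eq_0:
  assumes "emeasure M (space M) = 0" and "f \<in> borel_measurable M"
  shows "emeasure (density M f) (space (density M f)) = 0"
proof -
  have "AE y in M. False"
    using assms(1) by (subst AE_iff_measurable[of "space M"]) auto
  then have "(\<integral>\<^sup>+ y. f y * indicator (space M) y \<partial>M) = (\<integral>\<^sup>+ y. 0 \<partial>M)"
    by (intro nn_integral_cong_AE) (auto elim: AE_mp)
  then show ?thesis
    using assms(2) by (simp add: emeasure_density)
qed

lemma covar_PiM_null_measure:
  assumes "emeasure M (space M) = 0" and "finite I" and "I \<noteq> {}"
  shows "covar (PiM I (\<lambda>_. M)) X Y = 0"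
proof -
  interpret finite_measure M
    using assms(1) by (intro finite_measureI) simp
  interpret product_sigma_finite "\<lambda>_. M"
    by (simp add: product_sigma_finite_def sigma_finite_measure_axioms)
  have "emeasure (PiM I (\<lambda>_. M)) (space (PiM I (\<lambda>_. M))) = (\<Prod>i\<in>I. emeasure M (space M))"
    unfolding space_PiM using assms(2) by (rule emeasure_PiM) auto
  then have "emeasure (PiM I (\<lambda>_. M)) (space (PiM I (\<lambda>_. M))) = 0"
    using assms by (simp add: card_gt_0_iff)
  then have "AE ys in PiM I (\<lambda>_. M). False"
    by (subst AE_iff_measurable[of "space (PiM I (\<lambda>_. M))"]) auto
  then show ?thesis
    unfolding covar_def by (intro integral_eq_zero_AE) auto
qed

lemma integral_sum_lessThan2:
  fixes f :: "nat \<Rightarrow> nat \<Rightarrow> 'a \<Rightarrow> real"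
  assumes "\<And>a b. a < m \<Longrightarrow> b < m \<Longrightarrow> integrable M (f a b)"
  shows "(\<integral>x. (\<Sum>a<m. \<Sum>b<m. f a b x) \<partial>M) = (\<Sum>a<m. \<Sum>b<m. integral\<^sup>L M (f a b))"
proof -
  have "(\<integral>x. (\<Sum>a<m. \<Sum>b<m. f a b x) \<partial>M) = (\<Sum>a<m. \<integral>x. (\<Sum>b<m. f a b x) \<partial>M)"
    using assms by (intro Bochner_Integration.integral_sum Bochner_Integration.integrable_sum) auto
  also have "\<dots> = (\<Sum>a<m. \<Sum>b<m. integral\<^sup>L M (f a b))"
    using assms by (intro sum.cong refl Bochner_Integration.integral_sum) auto
  finally show ?thesis .
qed

lemma integral_sum_lessThan4:
  fixes f :: "nat \<Rightarrow> nat \<Rightarrow> nat \<Rightarrow> nat \<Rightarrow> 'a \<Rightarrow> real"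
  assumes "\<And>a b c d. a < m \<Longrightarrow> b < m \<Longrightarrow> c < m \<Longrightarrow> d < m \<Longrightarrow> integrable M (f a b c d)"
  shows "(\<integral>x. (\<Sum>a<m. \<Sum>b<m. \<Sum>c<m. \<Sum>d<m. f a b c d x) \<partial>M)
    = (\<Sum>a<m. \<Sum>b<m. \<Sum>c<m. \<Sum>d<m. integral\<^sup>L M (f a b c d))"
proof -
  have "(\<integral>x. (\<Sum>a<m. \<Sum>b<m. \<Sum>c<m. \<Sum>d<m. f a b c d x) \<partial>M)
      = (\<Sum>a<m. \<Sum>b<m. \<integral>x. (\<Sum>c<m. \<Sum>d<m. f a b c d x) \<partial>M)"
    using assms by (intro integral_sum_lessThan2 Bochner_Integration.integrable_sum) auto
  also have "\<dots> = (\<Sum>a<m. \<Sum>b<m. \<Sum>c<m. \<Sum>d<m. integral\<^sup>L M (f a b c d))"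
    using assms by (intro sum.cong refl integral_sum_lessThan2) auto
  finally show ?thesis .
qed

section \<open>Differentiating the network in one parameter\<close>

lemma preact_update_differentiable:
  assumes "\<And>c. (\<lambda>e. hh e c) differentiable (at e0)"
  shows "(\<lambda>e. preact n (\<theta>(p := \<theta> p + e)) l (hh e) r) differentiable (at e0)"
proof -
  have "(\<lambda>e. (\<theta>(p := \<theta> p + e)) q) differentiable (at e0)" for q
    by (cases "q = p") simp_all
  then show ?thesis
    unfolding preact_def
    by (intro differentiable_add differentiable_sum ballI differentiable_mult assms) simp_all
qed

lemma hid_update_differentiable:
  assumes "\<And>z. \<sigma> differentiable (at z)"
  shows "(\<lambda>e. hid n \<sigma> x (\<theta>(p := \<theta> p + e)) l r) differentiable (at e0)"
proof (induction l arbitrary: r)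
  case (Suc l)
  show ?case
    unfolding hid.simps
    by (rule differentiable_compose[of \<sigma>], rule assms, rule preact_update_differentiable, rule Suc.IH)
qed simp

lemma net_out_update_has_derivative:
  assumes "\<And>z. \<sigma> differentiable (at z)"
  shows "((\<lambda>e. net_out n \<sigma> L x (\<theta>(p := \<theta> p + e)) a) has_real_derivative jac_col n \<sigma> L x \<theta> p a) (at 0)"
proof -
  have "(\<lambda>e. net_out n \<sigma> L x (\<theta>(p := \<theta> p + e)) a) differentiable (at 0)"
    unfolding net_out_def by (intro preact_update_differentiable hid_update_differentiable assms)
  then show ?thesis
    unfolding jac_col_def pderiv_param_def by (simp add: DERIV_deriv_iff_real_differentiable)
qed

section \<open>Exponential families\<close>

locale exp_family =
  fixes \<nu> :: "'y measure" and t :: "'y \<Rightarrow> nat \<Rightarrow> real" and m :: nat and h0 :: "nat \<Rightarrow> real"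
  assumes measurable_t: "\<And>a. a < m \<Longrightarrow> (\<lambda>y. t y a) \<in> borel_measurable \<nu>"
    and interior: "in_interior_coords m (nat_param_space \<nu> t m) h0"
    and nontrivial: "emeasure \<nu> (space \<nu>) \<noteq> 0"
begin

definition tnorm :: "'y \<Rightarrow> real" where
  "tnorm y = (\<Sum>a<m. \<bar>t y a\<bar>)"

definition tdot0 :: "'y \<Rightarrow> real" where
  "tdot0 y = dotn m (t y) h0"

lemma measurable_dotn [measurable]: "(\<lambda>y. dotn m (t y) h) \<in> borel_measurable \<nu>"
  unfolding dotn_def by (intro borel_measurable_sum borel_measurable_times measurable_t) auto

lemma measurable_tnorm [measurable]: "tnorm \<in> borel_measurable \<nu>"
  unfolding tnorm_def by (intro borel_measurable_sum borel_measurable_abs measurable_t) auto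

lemma measurable_tdot0 [measurable]: "tdot0 \<in> borel_measurable \<nu>"
  unfolding tdot0_def by simp

lemma tnorm_nonneg: "0 \<le> tnorm y"
  unfolding tnorm_def by (simp add: sum_nonneg)

lemma abs_t_le_tnorm: "a < m \<Longrightarrow> \<bar>t y a\<bar> \<le> tnorm y"
  unfolding tnorm_def by (rule member_le_sum) auto

lemma integrable_exp_dotn: "h \<in> nat_param_space \<nu> t m \<Longrightarrow> integrable \<nu> (\<lambda>y. exp (dotn m (t y) h))"
  unfolding nat_param_space_def by (intro integrableI_bounded) auto

(* Since tnorm y is at most m times the largest |t y a|, an exponential moment of tnorm is bounded
   by exponential moments of single coordinates, which the interior hypothesis provides. *)

lemma exp_tnorm_le_sum_exp:
  fixes R :: real
  assumes "0 \<le> R"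
  shows "exp (tdot0 y + R * tnorm y)
    \<le> exp (tdot0 y) + (\<Sum>a<m. exp (tdot0 y + (m * R) * t y a) + exp (tdot0 y + (- (m * R)) * t y a))"
    (is "_ \<le> _ + (\<Sum>a<m. ?g a)")
proof (cases "m = 0")
  case True
  then have "tnorm y = 0"
    unfolding tnorm_def by simp
  then show ?thesis
    using True by simp
next
  case False
  obtain a where a: "a < m" and max: "\<And>a'. a' < m \<Longrightarrow> \<bar>t y a'\<bar> \<le> \<bar>t y a\<bar>"
    using Max_in[of "(\<lambda>a. \<bar>t y a\<bar>) ` {..<m}"] Max_ge[of "(\<lambda>a. \<bar>t y a\<bar>) ` {..<m}"] False
    by (fastforce simp: image_iff)
  have "tnorm y \<le> m * \<bar>t y a\<bar>"
    unfolding tnorm_def using sum_bounded_above[of "{..<m}" "\<lambda>a. \<bar>t y a\<bar>"] max by auto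
  then have "exp (tdot0 y + R * tnorm y) \<le> exp (tdot0 y + (m * R) * \<bar>t y a\<bar>)"
    using assms mult_left_mono by (fastforce simp: mult_ac)
  also have "\<dots> \<le> ?g a"
    by (cases "t y a \<ge> 0") auto
  also have "\<dots> \<le> (\<Sum>a<m. ?g a)"
    using a by (intro member_le_sum) (auto intro: add_nonneg_nonneg)
  finally show ?thesis
    using exp_ge_zero[of "tdot0 y"] by linarith
qed

lemma exists_exp_tnorm_integrable:
  "\<exists>r>0. \<forall>R. 0 \<le> R \<and> R \<le> r \<longrightarrow> integrable \<nu> (\<lambda>y. exp (tdot0 y + R * tnorm y))"
proof -
  obtain \<epsilon> where "\<epsilon> > 0" and ball: "\<And>h. (\<forall>a<m. \<bar>h a - h0 a\<bar> < \<epsilon>) \<Longrightarrow> h \<in> nat_param_space \<nu> t m"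
    using interior unfolding in_interior_coords_def by blast
  have shifted: "integrable \<nu> (\<lambda>y. exp (tdot0 y + c * t y a))" if "a < m" and "\<bar>c\<bar> < \<epsilon>" for a c
    using integrable_exp_dotn[OF ball[of "h0(a := h0 a + c)"]] that \<open>\<epsilon> > 0\<close>
    by (simp add: dotn_update_add tdot0_def mult.commute)
  have base: "integrable \<nu> (\<lambda>y. exp (tdot0 y))"
    using integrable_exp_dotn[OF ball[of h0]] \<open>\<epsilon> > 0\<close> by (simp add: tdot0_def)
  show ?thesis
  proof (intro exI[of _ "\<epsilon> / (m + 1)"] conjI allI impI)
    fix R assume R: "0 \<le> R \<and> R \<le> \<epsilon> / (m + 1)"
    then have "m * R \<le> m * (\<epsilon> / (m + 1))"
      by (intro mult_left_mono) auto
    also have "\<dots> < \<epsilon>"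
      using \<open>\<epsilon> > 0\<close> by (simp add: field_simps)
    finally have "\<bar>m * R\<bar> < \<epsilon>" and "\<bar>- (m * R)\<bar> < \<epsilon>"
      using R by auto
    then have "integrable \<nu> (\<lambda>y. exp (tdot0 y)
        + (\<Sum>a<m. exp (tdot0 y + (m * R) * t y a) + exp (tdot0 y + (- (m * R)) * t y a)))"
      by (intro Bochner_Integration.integrable_add base Bochner_Integration.integrable_sum shifted) auto
    then show "integrable \<nu> (\<lambda>y. exp (tdot0 y + R * tnorm y))"
      by (rule Bochner_Integration.integrable_bound)
        (use R in \<open>auto intro!: AE_I2 order_trans[OF exp_tnorm_le_sum_exp] abs_ge_self\<close>)
  qed (use \<open>\<epsilon> > 0\<close> in simp)
qed

definition rad :: real where
  "rad = (SOME r. 0 < r \<and> (\<forall>R. 0 \<le> R \<and> R \<le> r \<longrightarrow> integrable \<nu> (\<lambda>y. exp (tdot0 y + R * tnorm y))))"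

lemma rad_pos: "0 < rad"
  and integrable_exp_tnorm: "0 \<le> R \<Longrightarrow> R \<le> rad \<Longrightarrow> integrable \<nu> (\<lambda>y. exp (tdot0 y + R * tnorm y))"
  using someI_ex[OF exists_exp_tnorm_integrable] unfolding rad_def[symmetric] by auto

lemma integrable_exp_tdot0: "integrable \<nu> (\<lambda>y. exp (tdot0 y))"
  using integrable_exp_tnorm[of 0] rad_pos by simp

lemma integrable_exp_tdot0_mult_poly:
  assumes "f \<in> borel_measurable \<nu>" and "0 \<le> d"
    and bound: "\<And>y. y \<in> space \<nu> \<Longrightarrow> \<bar>f y\<bar> \<le> c * (tnorm y + d) ^ k"
  shows "integrable \<nu> (\<lambda>y. exp (tdot0 y) * f y)"
proof (rule Bochner_Integration.integrable_bound)
  define c' where "c' = \<bar>c\<bar> * real k ^ k * exp (rad * d) / rad ^ k"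
  have "0 \<le> c'"
    unfolding c'_def using rad_pos by simp
  show "integrable \<nu> (\<lambda>y. c' * exp (tdot0 y + rad * tnorm y))"
    using integrable_exp_tnorm[of rad] rad_pos by simp
  show "AE y in \<nu>. norm (exp (tdot0 y) * f y) \<le> norm (c' * exp (tdot0 y + rad * tnorm y))"
  proof (intro AE_I2)
    fix y assume "y \<in> space \<nu>"
    have nonneg: "0 \<le> tnorm y + d"
      using tnorm_nonneg assms(2) by (rule add_nonneg_nonneg)
    have "rad ^ k * (tnorm y + d) ^ k \<le> real k ^ k * exp (rad * (tnorm y + d))"
      using power_le_exp[of "rad * (tnorm y + d)" k] rad_pos nonneg by (simp add: power_mult_distrib)
    then have poly_le_exp: "(tnorm y + d) ^ k \<le> real k ^ k * exp (rad * (tnorm y + d)) / rad ^ k"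
      using rad_pos by (simp add: field_simps)
    have "\<bar>f y\<bar> \<le> \<bar>c\<bar> * (tnorm y + d) ^ k"
      using bound[OF \<open>y \<in> space \<nu>\<close>] by (rule order_trans) (simp add: mult_right_mono nonneg)
    also have "\<dots> \<le> \<bar>c\<bar> * (real k ^ k * exp (rad * (tnorm y + d)) / rad ^ k)"
      using poly_le_exp by (rule mult_left_mono) simp
    also have "\<dots> = c' * exp (rad * tnorm y)"
      unfolding c'_def using rad_pos by (simp add: distrib_left exp_add field_simps)
    finally have "exp (tdot0 y) * \<bar>f y\<bar> \<le> exp (tdot0 y) * (c' * exp (rad * tnorm y))"
      by (rule mult_left_mono) simp
    then show "norm (exp (tdot0 y) * f y) \<le> norm (c' * exp (tdot0 y + rad * tnorm y))"
      using \<open>0 \<le> c'\<close> by (simp add: abs_mult exp_add mult_ac)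
  qed
qed (use assms(1) in simp)

lemma abs_exp_dotn_diff_le:
  assumes "\<And>a. a < m \<Longrightarrow> \<bar>h a - h0 a\<bar> \<le> \<delta>" and "0 \<le> \<delta>" and "\<delta> \<le> rad / 2"
  shows "\<bar>exp (dotn m (t y) h) - exp (tdot0 y)\<bar> \<le> \<delta> * (2 / rad) * exp (tdot0 y + rad * tnorm y)"
proof -
  define D where "D = dotn m (t y) h - tdot0 y"
  have D_le: "\<bar>D\<bar> \<le> tnorm y * \<delta>"
    using abs_dotn_diff_le[OF assms(1)] unfolding D_def tdot0_def tnorm_def .
  also have "\<dots> \<le> tnorm y * (rad / 2)"
    using assms(3) tnorm_nonneg by (rule mult_left_mono)
  finally have D_half: "\<bar>D\<bar> \<le> rad / 2 * tnorm y"
    by (simp add: ac_simps)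
  have "rad / 2 * tnorm y \<le> exp (rad / 2 * tnorm y)"
    using exp_ge_add_one_self[of "rad / 2 * tnorm y"] by linarith
  then have tnorm_le: "tnorm y \<le> (2 / rad) * exp (rad / 2 * tnorm y)"
    using rad_pos by (simp add: field_simps)
  have "\<bar>exp (dotn m (t y) h) - exp (tdot0 y)\<bar> = exp (tdot0 y) * \<bar>exp D - 1\<bar>"
    unfolding D_def by (simp add: exp_diff abs_mult field_simps)
  also have "\<dots> \<le> exp (tdot0 y) * (\<bar>D\<bar> * exp \<bar>D\<bar>)"
    by (intro mult_left_mono abs_exp_minus_one_le) simp
  also have "\<dots> \<le> exp (tdot0 y) * ((tnorm y * \<delta>) * exp (rad / 2 * tnorm y))"
    using D_le D_half by (intro mult_left_mono mult_mono) auto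
  also have "\<dots> \<le> exp (tdot0 y) * (((2 / rad) * exp (rad / 2 * tnorm y) * \<delta>) * exp (rad / 2 * tnorm y))"
    using tnorm_le assms(2) by (intro mult_left_mono mult_right_mono) auto
  also have "\<dots> = \<delta> * (2 / rad) * exp (tdot0 y + rad * tnorm y)"
    by (simp add: exp_add[symmetric] field_simps)
  finally show ?thesis .
qed

lemma integrable_exp_dotn_near:
  assumes "\<And>a. a < m \<Longrightarrow> \<bar>h a - h0 a\<bar> \<le> rad"
  shows "integrable \<nu> (\<lambda>y. exp (dotn m (t y) h))"
proof (rule Bochner_Integration.integrable_bound[OF integrable_exp_tnorm[of rad]])
  show "AE y in \<nu>. norm (exp (dotn m (t y) h)) \<le> norm (exp (tdot0 y + rad * tnorm y))"
  proof (intro AE_I2)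
    fix y
    have "\<bar>dotn m (t y) h - tdot0 y\<bar> \<le> tnorm y * rad"
      using abs_dotn_diff_le[OF assms] unfolding tdot0_def tnorm_def .
    then show "norm (exp (dotn m (t y) h)) \<le> norm (exp (tdot0 y + rad * tnorm y))"
      by (simp add: mult.commute)
  qed
qed (use rad_pos in auto)

lemma eventually_perturbation_small:
  assumes H0: "\<And>a. a < m \<Longrightarrow> H 0 a = h0 a"
    and HD: "\<And>a. a < m \<Longrightarrow> ((\<lambda>e. H e a) has_real_derivative J a) (at 0)"
  shows "\<forall>\<^sub>F e in at 0. (\<forall>a<m. \<bar>H e a - h0 a\<bar> \<le> (1 + (\<Sum>a<m. \<bar>J a\<bar>)) * \<bar>e\<bar>)
    \<and> (1 + (\<Sum>a<m. \<bar>J a\<bar>)) * \<bar>e\<bar> \<le> rad / 2 \<and> e \<noteq> 0"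
proof -
  define C where "C = 1 + (\<Sum>a<m. \<bar>J a\<bar>)"
  have "1 \<le> C"
    unfolding C_def by (simp add: sum_nonneg)
  have "\<forall>\<^sub>F e in at 0. \<forall>a<m. \<bar>H e a - h0 a\<bar> \<le> C * \<bar>e\<bar>"
    using eventually_has_derivative_coords_close[of m H J] HD H0 unfolding C_def by simp
  moreover have "\<forall>\<^sub>F e in at (0::real). C * \<bar>e\<bar> \<le> rad / 2 \<and> e \<noteq> 0"
    using rad_pos \<open>1 \<le> C\<close>
    by (auto simp: eventually_at field_simps intro!: exI[of _ "rad / (2 * C)"])
  ultimately show ?thesis
    unfolding C_def[symmetric] by eventually_elim auto
qed

(* Differentiation under the integral sign: by abs_exp_dotn_diff_le the difference quotients are
   dominated by a multiple of the exponential moment exp (tdot0 y + rad * tnorm y). *)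

lemma integral_diff_quotient_tendsto:
  assumes H0: "\<And>a. a < m \<Longrightarrow> H 0 a = h0 a"
    and HD: "\<And>a. a < m \<Longrightarrow> ((\<lambda>e. H e a) has_real_derivative J a) (at 0)"
  shows "((\<lambda>e. \<integral>y. (exp (dotn m (t y) (H e)) - exp (tdot0 y)) / e \<partial>\<nu>)
    \<longlongrightarrow> (\<integral>y. exp (tdot0 y) * dotn m (t y) J \<partial>\<nu>)) (at 0)"
proof (rule integral_dominated_convergence_at)
  define C where "C = 1 + (\<Sum>a<m. \<bar>J a\<bar>)"
  have "1 \<le> C"
    unfolding C_def by (simp add: sum_nonneg)
  show "integrable \<nu> (\<lambda>y. C * (2 / rad) * exp (tdot0 y + rad * tnorm y))"
    using integrable_exp_tnorm[of rad] rad_pos by simp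
  show "\<forall>\<^sub>F e in at 0. \<forall>y\<in>space \<nu>.
      \<bar>(exp (dotn m (t y) (H e)) - exp (tdot0 y)) / e\<bar> \<le> C * (2 / rad) * exp (tdot0 y + rad * tnorm y)"
  proof -
    have "\<forall>\<^sub>F e in at 0. (\<forall>a<m. \<bar>H e a - h0 a\<bar> \<le> C * \<bar>e\<bar>) \<and> C * \<bar>e\<bar> \<le> rad / 2 \<and> e \<noteq> 0"
      unfolding C_def by (rule eventually_perturbation_small) (use H0 HD in auto)
    then show ?thesis
    proof eventually_elim
      case (elim e)
      have "\<bar>exp (dotn m (t y) (H e)) - exp (tdot0 y)\<bar> \<le> (C * \<bar>e\<bar>) * (2 / rad) * exp (tdot0 y + rad * tnorm y)"
        for y
        using elim \<open>1 \<le> C\<close> by (intro abs_exp_dotn_diff_le) auto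
      then show ?case
        using elim by (simp add: abs_divide divide_le_eq mult_ac)
    qed
  qed
  show "((\<lambda>e. (exp (dotn m (t y) (H e)) - exp (tdot0 y)) / e) \<longlongrightarrow> exp (tdot0 y) * dotn m (t y) J) (at 0)"
    for y
  proof -
    have "((\<lambda>e. exp (dotn m (t y) (H e))) has_real_derivative exp (dotn m (t y) (H 0)) * dotn m (t y) J) (at 0)"
      by (rule DERIV_fun_exp, rule has_real_derivative_dotn, rule HD)
    moreover have "dotn m (t y) (H 0) = tdot0 y"
      unfolding tdot0_def using H0 by (rule dotn_cong)
    ultimately show ?thesis
      unfolding DERIV_def by simp
  qed
qed simp_all

lemma partition_has_derivative:
  assumes H0: "\<And>a. a < m \<Longrightarrow> H 0 a = h0 a"
    and HD: "\<And>a. a < m \<Longrightarrow> ((\<lambda>e. H e a) has_real_derivative J a) (at 0)"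
  shows "((\<lambda>e. \<integral>y. exp (dotn m (t y) (H e)) \<partial>\<nu>) has_real_derivative
      (\<integral>y. exp (tdot0 y) * dotn m (t y) J \<partial>\<nu>)) (at 0)"
  unfolding DERIV_def
proof (rule Lim_transform_eventually[OF integral_diff_quotient_tendsto[OF H0 HD]])
  have H0_integral: "(\<integral>y. exp (dotn m (t y) (H 0)) \<partial>\<nu>) = (\<integral>y. exp (tdot0 y) \<partial>\<nu>)"
    unfolding tdot0_def using dotn_cong[OF H0] by simp
  show "\<forall>\<^sub>F e in at 0. (\<integral>y. (exp (dotn m (t y) (H e)) - exp (tdot0 y)) / e \<partial>\<nu>)
      = ((\<integral>y. exp (dotn m (t y) (H (0 + e))) \<partial>\<nu>) - (\<integral>y. exp (dotn m (t y) (H 0)) \<partial>\<nu>)) / e"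
  proof -
    have "\<forall>\<^sub>F e in at 0. \<forall>a<m. \<bar>H e a - h0 a\<bar> \<le> rad"
      using eventually_perturbation_small[of H J] H0 HD
      by (auto elim!: eventually_mono intro: order_trans simp: field_simps)
    then show ?thesis
    proof eventually_elim
      case (elim e)
      then have "integrable \<nu> (\<lambda>y. exp (dotn m (t y) (H e)))"
        by (intro integrable_exp_dotn_near) auto
      then show ?case
        unfolding H0_integral using integrable_exp_tdot0 by simp
    qed
  qed
qed

abbreviation P :: "'y measure" where
  "P \<equiv> expfam_measure \<nu> t m h0"

abbreviation \<eta> :: "nat \<Rightarrow> real" where
  "\<eta> \<equiv> suff_mean \<nu> t m h0"

definition Z0 :: real where
  "Z0 = (\<integral>y. exp (tdot0 y) \<partial>\<nu>)"

lemma Z0_pos: "0 < Z0"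
proof -
  have "Z0 \<noteq> 0"
  proof
    assume "Z0 = 0"
    then have "AE y in \<nu>. exp (tdot0 y) = 0"
      unfolding Z0_def using integral_nonneg_eq_0_iff_AE[OF integrable_exp_tdot0] by simp
    then have "emeasure \<nu> (space \<nu>) = 0"
      by (subst (asm) AE_iff_measurable[of "space \<nu>"]) auto
    with nontrivial show False ..
  qed
  moreover have "0 \<le> Z0"
    unfolding Z0_def by simp
  ultimately show ?thesis
    by simp
qed

lemma expfam_density_h0: "expfam_density \<nu> t m h0 y = exp (tdot0 y) / Z0"
  using Z0_pos unfolding expfam_density_def log_partition_def Z0_def tdot0_def by (simp add: exp_diff)

lemma P_eq_density: "P = density \<nu> (\<lambda>y. ennreal (exp (tdot0 y) / Z0))"
  unfolding expfam_measure_def expfam_density_h0 ..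

lemma prob_space_P: "prob_space P"
proof
  have "emeasure P (space P) = (\<integral>\<^sup>+ y. ennreal (exp (tdot0 y) / Z0) * indicator (space \<nu>) y \<partial>\<nu>)"
    unfolding P_eq_density space_density by (rule emeasure_density) auto
  also have "\<dots> = (\<integral>\<^sup>+ y. ennreal (exp (tdot0 y) / Z0) \<partial>\<nu>)"
    by (rule nn_integral_cong) simp
  also have "\<dots> = ennreal (\<integral>y. exp (tdot0 y) / Z0 \<partial>\<nu>)"
    using integrable_exp_tdot0 Z0_pos by (intro nn_integral_eq_integral) auto
  also have "(\<integral>y. exp (tdot0 y) / Z0 \<partial>\<nu>) = 1"
    using Z0_pos unfolding Z0_def by simp
  finally show "emeasure P (space P) = 1"
    by simp
qed

lemma integral_P: "f \<in> borel_measurable \<nu> \<Longrightarrow> integral\<^sup>L P f = (\<integral>y. exp (tdot0 y) / Z0 * f y \<partial>\<nu>)"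
  unfolding P_eq_density using Z0_pos by (subst integral_density) auto

lemma integrable_P_iff:
  "f \<in> borel_measurable \<nu> \<Longrightarrow> integrable P f \<longleftrightarrow> integrable \<nu> (\<lambda>y. exp (tdot0 y) / Z0 * f y)"
  unfolding P_eq_density using Z0_pos by (subst integrable_density) auto

lemma integrable_P_poly:
  assumes "f \<in> borel_measurable \<nu>" and "0 \<le> d"
    and "\<And>y. y \<in> space \<nu> \<Longrightarrow> \<bar>f y\<bar> \<le> c * (tnorm y + d) ^ k"
  shows "integrable P f"
  using integrable_exp_tdot0_mult_poly[OF assms] assms(1) by (simp add: integrable_P_iff)

lemma integral_exp_tdot0_dotn: "(\<integral>y. exp (tdot0 y) * dotn m (t y) J \<partial>\<nu>) = Z0 * (\<Sum>a<m. \<eta> a * J a)"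
proof -
  have int: "integrable \<nu> (\<lambda>y. exp (tdot0 y) * t y a)" if "a < m" for a
    using that measurable_t tnorm_nonneg abs_t_le_tnorm
    by (intro integrable_exp_tdot0_mult_poly[where c=1 and d=0 and k=1]) auto
  have mean: "(\<integral>y. exp (tdot0 y) * t y a \<partial>\<nu>) = Z0 * \<eta> a" if "a < m" for a
  proof -
    have "\<eta> a = (\<integral>y. exp (tdot0 y) * t y a / Z0 \<partial>\<nu>)"
      unfolding suff_mean_def integral_P[OF measurable_t[OF that]] by (simp add: field_simps)
    then show ?thesis
      using Z0_pos by simp
  qed
  have "(\<integral>y. exp (tdot0 y) * dotn m (t y) J \<partial>\<nu>) = (\<integral>y. (\<Sum>a<m. exp (tdot0 y) * t y a * J a) \<partial>\<nu>)"
    unfolding dotn_def by (simp add: sum_distrib_left mult.assoc)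
  also have "\<dots> = (\<Sum>a<m. (\<integral>y. exp (tdot0 y) * t y a \<partial>\<nu>) * J a)"
    using int by (simp add: Bochner_Integration.integral_sum)
  also have "\<dots> = Z0 * (\<Sum>a<m. \<eta> a * J a)"
    using mean by (simp add: sum_distrib_left mult.assoc)
  finally show ?thesis .
qed

section \<open>Scores and their moments\<close>

definition score :: "(nat \<Rightarrow> real) \<Rightarrow> 'y \<Rightarrow> real" where
  "score J y = (\<Sum>a<m. (t y a - \<eta> a) * J a)"

lemma measurable_score [measurable]: "score J \<in> borel_measurable \<nu>"
  unfolding score_def by (intro borel_measurable_sum borel_measurable_times borel_measurable_diff measurable_t) auto

lemma loglik_has_derivative:
  assumes H0: "\<And>a. a < m \<Longrightarrow> H 0 a = h0 a"
    and HD: "\<And>a. a < m \<Longrightarrow> ((\<lambda>e. H e a) has_real_derivative J a) (at 0)"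
  shows "((\<lambda>e. ln (expfam_density \<nu> t m (H e) y)) has_real_derivative score J y) (at 0)"
proof -
  have ln_density: "ln (expfam_density \<nu> t m h y) = dotn m (t y) h - ln (\<integral>y'. exp (dotn m (t y') h) \<partial>\<nu>)" for h
    unfolding expfam_density_def log_partition_def by simp
  have "(\<integral>y'. exp (dotn m (t y') (H 0)) \<partial>\<nu>) = Z0"
    unfolding Z0_def tdot0_def using dotn_cong[OF H0] by simp
  then have "((\<lambda>e. ln (\<integral>y'. exp (dotn m (t y') (H e)) \<partial>\<nu>)) has_real_derivative (\<Sum>a<m. \<eta> a * J a)) (at 0)"
    using DERIV_chain2[OF DERIV_ln_divide partition_has_derivative[OF H0 HD]] Z0_pos
    by (simp add: integral_exp_tdot0_dotn)
  from DERIV_diff[OF has_real_derivative_dotn[OF HD] this]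
  show ?thesis
    unfolding ln_density score_def dotn_def by (simp add: sum_subtractf left_diff_distrib)
qed

definition centred_bound :: "'y \<Rightarrow> real" where
  "centred_bound y = tnorm y + (\<Sum>a<m. \<bar>\<eta> a\<bar>)"

lemma centred_bound_nonneg: "0 \<le> centred_bound y"
  unfolding centred_bound_def by (simp add: tnorm_nonneg sum_nonneg add_nonneg_nonneg)

lemma abs_centred_le: "a < m \<Longrightarrow> \<bar>t y a - \<eta> a\<bar> \<le> centred_bound y"
  using abs_t_le_tnorm[of a y] member_le_sum[of a "{..<m}" "\<lambda>a. \<bar>\<eta> a\<bar>"]
  unfolding centred_bound_def by fastforce

lemma abs_score_le: "\<bar>score J y\<bar> \<le> (\<Sum>a<m. \<bar>J a\<bar>) * centred_bound y"
proof -
  have "\<bar>score J y\<bar> \<le> (\<Sum>a<m. \<bar>t y a - \<eta> a\<bar> * \<bar>J a\<bar>)"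
    unfolding score_def by (rule order_trans[OF sum_abs]) (simp add: abs_mult)
  also have "\<dots> \<le> (\<Sum>a<m. centred_bound y * \<bar>J a\<bar>)"
    by (intro sum_mono mult_right_mono abs_centred_le) auto
  also have "\<dots> = (\<Sum>a<m. \<bar>J a\<bar>) * centred_bound y"
    by (simp add: sum_distrib_left mult.commute)
  finally show ?thesis .
qed

lemma integrable_P_bounded_by_power:
  assumes "f \<in> borel_measurable \<nu>" and "\<And>y. \<bar>f y\<bar> \<le> c * centred_bound y ^ k"
  shows "integrable P f"
  using assms by (intro integrable_P_poly[where d="\<Sum>a<m. \<bar>\<eta> a\<bar>"]) (auto simp: centred_bound_def sum_nonneg)

lemma integrable_centred_stat_mult:
  assumes "a < m" "b < m"
  shows "integrable P (\<lambda>y. (t y a - \<eta> a) * (t y b - \<eta> b))"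
proof (rule integrable_P_bounded_by_power[where c=1 and k=2])
  fix y
  show "\<bar>(t y a - \<eta> a) * (t y b - \<eta> b)\<bar> \<le> 1 * centred_bound y ^ 2"
    unfolding abs_mult power2_eq_square using assms
    by (simp add: mult_mono abs_centred_le centred_bound_nonneg)
qed (use assms measurable_t in simp)

lemma integrable_centred_stat_mult4:
  assumes "a < m" "b < m" "c < m" "d < m"
  shows "integrable P (\<lambda>y. (t y a - \<eta> a) * (t y b - \<eta> b) * (t y c - \<eta> c) * (t y d - \<eta> d))"
proof (rule integrable_P_bounded_by_power[where c=1 and k=4])
  fix y
  show "\<bar>(t y a - \<eta> a) * (t y b - \<eta> b) * (t y c - \<eta> c) * (t y d - \<eta> d)\<bar> \<le> 1 * centred_bound y ^ 4"
    unfolding abs_mult power4_eq_xxxx using assms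
    by (simp add: mult_mono abs_centred_le centred_bound_nonneg)
qed (use assms measurable_t in simp)

lemma abs_score_mult_le:
  "\<bar>score J1 y * score J2 y\<bar> \<le> (\<Sum>a<m. \<bar>J1 a\<bar>) * (\<Sum>a<m. \<bar>J2 a\<bar>) * centred_bound y ^ 2"
proof -
  have "\<bar>score J1 y\<bar> * \<bar>score J2 y\<bar>
      \<le> ((\<Sum>a<m. \<bar>J1 a\<bar>) * centred_bound y) * ((\<Sum>a<m. \<bar>J2 a\<bar>) * centred_bound y)"
    by (intro mult_mono abs_score_le) (auto intro!: mult_nonneg_nonneg sum_nonneg centred_bound_nonneg)
  then show ?thesis
    by (simp add: abs_mult power2_eq_square mult_ac)
qed

lemma integrable_score_mult: "integrable P (\<lambda>y. score J1 y * score J2 y)"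
  by (rule integrable_P_bounded_by_power[OF _ abs_score_mult_le]) simp

lemma integrable_score_mult4: "integrable P (\<lambda>y. score J1 y * score J2 y * (score J3 y * score J4 y))"
proof (rule integrable_P_bounded_by_power[where k=4])
  fix y
  have "\<bar>score J1 y * score J2 y\<bar> * \<bar>score J3 y * score J4 y\<bar>
      \<le> ((\<Sum>a<m. \<bar>J1 a\<bar>) * (\<Sum>a<m. \<bar>J2 a\<bar>) * centred_bound y ^ 2)
        * ((\<Sum>a<m. \<bar>J3 a\<bar>) * (\<Sum>a<m. \<bar>J4 a\<bar>) * centred_bound y ^ 2)"
    by (intro mult_mono abs_score_mult_le) (auto intro!: mult_nonneg_nonneg sum_nonneg)
  then show "\<bar>score J1 y * score J2 y * (score J3 y * score J4 y)\<bar>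
      \<le> (\<Sum>a<m. \<bar>J1 a\<bar>) * (\<Sum>a<m. \<bar>J2 a\<bar>) * ((\<Sum>a<m. \<bar>J3 a\<bar>) * (\<Sum>a<m. \<bar>J4 a\<bar>))
        * centred_bound y ^ 4"
    by (simp add: abs_mult power4_eq_xxxx power2_eq_square mult_ac)
qed simp

lemma score_mult_expand:
  "score J1 y * score J2 y = (\<Sum>a<m. \<Sum>b<m. (t y a - \<eta> a) * (t y b - \<eta> b) * (J1 a * J2 b))"
  unfolding score_def by (simp add: sum_product mult_ac)

lemma integral_score_mult:
  "(\<integral>y. score J1 y * score J2 y \<partial>P) = (\<Sum>a<m. \<Sum>b<m. suff_cov \<nu> t m h0 a b * (J1 a * J2 b))"
  unfolding score_mult_expand using integrable_centred_stat_mult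
  by (subst integral_sum_lessThan2) (simp_all add: suff_cov_def)

lemma integral_score_mult4:
  "(\<integral>y. score J1 y * score J2 y * (score J3 y * score J4 y) \<partial>P)
    = (\<Sum>a<m. \<Sum>b<m. \<Sum>c<m. \<Sum>d<m. suff_K \<nu> t m h0 a b c d * (J1 a * J2 b * J3 c * J4 d))"
proof -
  have expand: "score J1 y * score J2 y * (score J3 y * score J4 y) = (\<Sum>a<m. \<Sum>b<m. \<Sum>c<m. \<Sum>d<m.
      (t y a - \<eta> a) * (t y b - \<eta> b) * (t y c - \<eta> c) * (t y d - \<eta> d) * (J1 a * J2 b * J3 c * J4 d))" for y
    unfolding score_mult_expand unfolding sum_distrib_right unfolding sum_distrib_left
    by (intro sum.cong refl) (simp add: mult_ac)
  show ?thesis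
    unfolding expand using integrable_centred_stat_mult4
    by (subst integral_sum_lessThan4) (simp_all add: suff_K_def)
qed

section \<open>Covariance of the empirical Fisher information\<close>

lemma covar_score_products:
  "covar P (\<lambda>y. score J1 y * score J2 y) (\<lambda>y. score J3 y * score J4 y)
    = (\<Sum>a<m. \<Sum>b<m. \<Sum>c<m. \<Sum>d<m. (suff_K \<nu> t m h0 a b c d - suff_cov \<nu> t m h0 a b * suff_cov \<nu> t m h0 c d)
        * (J1 a * J2 b * J3 c * J4 d))"
proof -
  have "(\<integral>y. score J1 y * score J2 y \<partial>P) * (\<integral>y. score J3 y * score J4 y \<partial>P)
      = (\<Sum>a<m. \<Sum>b<m. \<Sum>c<m. \<Sum>d<m. suff_cov \<nu> t m h0 a b * suff_cov \<nu> t m h0 c d * (J1 a * J2 b * J3 c * J4 d))"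
    unfolding integral_score_mult unfolding sum_distrib_right unfolding sum_distrib_left
    by (intro sum.cong refl) (simp add: mult_ac)
  then show ?thesis
    using integrable_score_mult integrable_score_mult4
    by (simp add: covar_eq_integral_mult_minus[OF prob_space_P] integral_score_mult4
        sum_subtractf left_diff_distrib)
qed

lemma abs_covar_score_products_le:
  "\<bar>covar P (\<lambda>y. score J1 y * score J2 y) (\<lambda>y. score J3 y * score J4 y)\<bar>
    \<le> norm2n m J1 * norm2n m J2 * norm2n m J3 * norm2n m J4
      * frob4 m (\<lambda>a b c d. suff_K \<nu> t m h0 a b c d - suff_cov \<nu> t m h0 a b * suff_cov \<nu> t m h0 c d)"
  unfolding covar_score_products by (rule abs_tensor_contraction_le_frob4)

end

lemma covar_PiM_expfam_null:
  fixes N :: nat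
  assumes "emeasure \<nu> (space \<nu>) = 0" and "\<And>a. a < m \<Longrightarrow> (\<lambda>y. t y a) \<in> borel_measurable \<nu>"
    and "N \<ge> 1"
  shows "covar (PiM {..<N} (\<lambda>_. expfam_measure \<nu> t m h)) X Y = 0"
proof (rule covar_PiM_null_measure)
  have "(\<lambda>y. dotn m (t y) h) \<in> borel_measurable \<nu>"
    unfolding dotn_def using assms(2) by (intro borel_measurable_sum borel_measurable_times) auto
  then show "emeasure (expfam_measure \<nu> t m h) (space (expfam_measure \<nu> t m h)) = 0"
    unfolding expfam_measure_def expfam_density_def
    by (intro emeasure_density_space_eq_0 assms(1)) simp
qed (use assms(3) in \<open>auto simp: lessThan_empty_iff\<close>)

theorem mainTheorem17:
  fixes n :: "nat \<Rightarrow> nat" and L N :: nat and \<sigma> :: "real \<Rightarrow> real" and x :: "nat \<Rightarrow> real"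
    and \<theta> :: "nat \<times> nat \<times> nat \<Rightarrow> real" and \<nu> :: "'y measure" and t :: "'y \<Rightarrow> nat \<Rightarrow> real"
    and i j k l :: "nat \<times> nat \<times> nat"
  assumes "L \<ge> 1"
    and "\<forall>m. 1 \<le> m \<and> m \<le> L \<longrightarrow> n m \<ge> 1"
    and "\<forall>z. \<sigma> differentiable (at z)"
    and "\<forall>a < n L. (\<lambda>y. t y a) \<in> borel_measurable \<nu>"
    and "in_interior_coords (n L) (nat_param_space \<nu> t (n L)) (net_out n \<sigma> L x \<theta>)"
    and "N \<ge> 1"
    and "i \<in> params n L" and "j \<in> params n L" and "k \<in> params n L" and "l \<in> params n L"
  shows "\<bar>covar (PiM {..<N} (\<lambda>_. net_model \<nu> t n \<sigma> L x \<theta>))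
              (\<lambda>ys. emp_fisher N \<nu> t n \<sigma> L x \<theta> ys i j)
              (\<lambda>ys. emp_fisher N \<nu> t n \<sigma> L x \<theta> ys k l)\<bar>
         \<le> 1 / real N
            * norm2n (n L) (jac_col n \<sigma> L x \<theta> i) * norm2n (n L) (jac_col n \<sigma> L x \<theta> j)
            * norm2n (n L) (jac_col n \<sigma> L x \<theta> k) * norm2n (n L) (jac_col n \<sigma> L x \<theta> l)
            * frob4 (n L) (\<lambda>a b c d. suff_K \<nu> t (n L) (net_out n \<sigma> L x \<theta>) a b c d
                 - suff_cov \<nu> t (n L) (net_out n \<sigma> L x \<theta>) a b * suff_cov \<nu> t (n L) (net_out n \<sigma> L x \<theta>) c d)"
  (is "\<bar>?cov\<bar> \<le> ?rhs")
proof (cases "emeasure \<nu> (space \<nu>) = 0")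
  case True
  have "0 \<le> ?rhs"
    unfolding norm2n_def frob4_def by (intro mult_nonneg_nonneg) (auto intro!: sum_nonneg)
  moreover have "?cov = 0"
    unfolding net_model_def using True assms(4,6) by (intro covar_PiM_expfam_null) auto
  ultimately show ?thesis
    by simp
next
  case False
  interpret exp_family \<nu> t "n L" "net_out n \<sigma> L x \<theta>"
    using assms(4,5) False by unfold_locales auto
  let ?J = "jac_col n \<sigma> L x \<theta>"
  have score: "pderiv_param (\<lambda>\<theta>'. loglik \<nu> t n \<sigma> L x \<theta>' y) \<theta> p = score (?J p) y" for p y
    unfolding pderiv_param_def loglik_def
    by (intro DERIV_imp_deriv loglik_has_derivative net_out_update_has_derivative) (use assms(3) in auto)
  have "?cov = covar P (\<lambda>y. score (?J i) y * score (?J j) y) (\<lambda>y. score (?J k) y * score (?J l) y) / N"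
    unfolding emp_fisher_def net_model_def score
    by (intro covar_PiM_empirical_means prob_space_P assms(6) integrable_score_mult integrable_score_mult4)
  then show ?thesis
    using abs_covar_score_products_le[of "?J i" "?J j" "?J k" "?J l"] assms(6)
    by (simp add: abs_divide divide_right_mono)
qed

end
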